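(* Assume (H3.1) and (H3.2). The function $\widetilde W(t,x):=\lim_{m\to\infty}W_m(t,x)$ (a nondecreasing limit; $\widetilde W$ is lower semicontinuous with at most linear growth) is a viscosity supersolution of $$\min\Big\{w(t,x)-h(t,x),\;-\partial_tw(t,x)-H^-(t,x,w,Dw,D^2w)\Big\}=0,\ (t,x)\in[0,T)\times\mathbb R^n,\qquad w(T,x)=\Phi(x).$$
   Context: Setting. Fix $T>0$. Let $\Omega=C_0([0,T];\mathbb R^d)$, $P$ the Wiener measure, $B$ the coordinate Brownian motion, $\mathbb F=(\mathcal F_s)$ its $P$-augmented natural filtration. $U,V$ are compact metric spaces. $b:[0,T]\times\mathbb R^n\times U\times V\to\mathbb R^n$ and $\sigma:[0,T]\times\mathbb R^n\times U\times V\to\mathbb R^{n\times d}$ satisfy (H3.1): for each $x$ they are continuous in $(t,u,v)$, and Lipschitz in $x$ uniformly in $(t,u,v)$. $\Phi:\mathbb R^n\to\mathbb R$, $h:[0,T]\times\mathbb R^n\to\mathbb R$, $f:[0,T]\times\mathbb R^n\times\mathbb R\times\mathbb R^d\times U\times V\to\mathbb R$ satisfy (H3.2): for each $(x,y,z)$, $f(\cdot,x,y,z,\cdot,\cdot)$ is continuous in $(t,u,v)$ and $f$ is Lipschitz in $(x,y,z)$ uniformly in $(t,u,v)$; $\Phi$ is Lipschitz; $h(\cdot,x)$ is continuous for each $x$, $h$ is Lipschitz in $x$ uniformly in $t$, and $h(T,x)\le\Phi(x)$. $\mathcal U_{t,s}$, $\mathcal V_{t,s}$ are the sets of $U$-,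 resp. $V$-valued progressively measurable processes on $[t,s]$; $\mathcal B_{t,s}$ is the set of nonanticipative strategies $\beta:\mathcal U_{t,s}\to\mathcal V_{t,s}$. $X^{t,x;u,v}$ solves $dX_s=b(s,X_s,u_s,v_s)ds+\sigma(s,X_s,u_s,v_s)dB_s$, $X_t=x$. For $m\in\mathbb N$, $({}^mY^{t,x;u,v},{}^mZ^{t,x;u,v})$ solves the BSDE ${}^mY_s=\Phi(X^{t,x;u,v}_T)+\int_s^T f(r,X^{t,x;u,v}_r,{}^mY_r,{}^mZ_r,u_r,v_r)dr+m\int_s^T({}^mY_r-h(r,X^{t,x;u,v}_r))^-dr-\int_s^T{}^mZ_rdB_r$, $s\in[t,T]$; $W_m(t,x)=\operatorname{essinf}_{\beta\in\mathcal B_{t,T}}\operatorname{esssup}_{u\in\mathcal U_{t,T}}{}^mY^{t,x;u,\beta(u)}_t$. Each $W_m$ is deterministic, continuous, of linear growth, nondecreasing in $m$, and is the viscosity solution of $-\partial_tW_m-\sup_u\inf_v\{\tfrac12\mathrm{tr}(\sigma\sigma^TD^2W_m)+DW_m\cdot b+f(t,x,W_m,DW_m\sigma,u,v)+m(W_m-h(t,x))^-\}=0$, $W_m(T,\cdot)=\Phi$. Hamiltonian: $H^-(t,x,y,q,X)=\sup_{u\in U}\inf_{v\in V}\{\tfrac12\mathrm{tr}(\sigma\sigma^T(t,x,u,v)X)+q\cdot b(t,x,u,v)+f(t,x,y,q\sigma(t,x,u,v),u,v)\}$. Supersolution: a lower semicontinuous $w$ is a viscosity supersolution if $w(T,x)\ge\Phi(x)$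 for all $x$ and, for every $\varphi\in C^3_{l,b}([0,T]\times\mathbb R^n)$ ($C^3$ with bounded derivatives of orders 1–3) such that $w-\varphi$ attains a local minimum at $(t,x)\in[0,T)\times\mathbb R^n$, $\min\{w(t,x)-h(t,x),-\partial_t\varphi(t,x)-H^-(t,x,w(t,x),D\varphi(t,x),D^2\varphi(t,x))\}\ge0$. *)

theory Defs
  imports "HOL-Analysis.Analysis"
begin

definition C3lb :: "(real \<times> (real^'n) \<Rightarrow> real) \<Rightarrow> bool" where
  "C3lb \<phi> \<longleftrightarrow>
     (\<exists>(D1 :: real \<times> (real^'n) \<Rightarrow> (real \<times> (real^'n)) \<Rightarrow>\<^sub>L real)
        (D2 :: real \<times> (real^'n) \<Rightarrow> (real \<times> (real^'n)) \<Rightarrow>\<^sub>L ((real \<times> (real^'n)) \<Rightarrow>\<^sub>L real))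
        (D3 :: real \<times> (real^'n) \<Rightarrow> (real \<times> (real^'n)) \<Rightarrow>\<^sub>L ((real \<times> (real^'n)) \<Rightarrow>\<^sub>L ((real \<times> (real^'n)) \<Rightarrow>\<^sub>L real))).
        (\<forall>z. (\<phi> has_derivative blinfun_apply (D1 z)) (at z)) \<and>
        (\<forall>z. (D1 has_derivative blinfun_apply (D2 z)) (at z)) \<and>
        (\<forall>z. (D2 has_derivative blinfun_apply (D3 z)) (at z)) \<and>
        continuous_on UNIV D3 \<and>
        bounded (range D1) \<and> bounded (range D2) \<and> bounded (range D3))"

definition dt :: "(real \<times> (real^'n) \<Rightarrow> real) \<Rightarrow> real \<Rightarrow> real^'n \<Rightarrow> real" where
  "dt \<phi> t x = frechet_derivative \<phi> (at (t, x)) (1, 0)"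

definition Dx :: "(real \<times> (real^'n) \<Rightarrow> real) \<Rightarrow> real \<Rightarrow> real^'n \<Rightarrow> real^'n" where
  "Dx \<phi> t x = (\<chi> i. frechet_derivative \<phi> (at (t, x)) (0, axis i 1))"

definition D2x :: "(real \<times> (real^'n) \<Rightarrow> real) \<Rightarrow> real \<Rightarrow> real^'n \<Rightarrow> real^'n^'n" where
  "D2x \<phi> t x = (\<chi> i j. frechet_derivative
        (\<lambda>w. frechet_derivative \<phi> (at w) (0, axis j 1)) (at (t, x)) (0, axis i 1))"

definition ham_int ::
  "(real \<Rightarrow> real^'n \<Rightarrow> 'u \<Rightarrow> 'v \<Rightarrow> real^'n) \<Rightarrow>
   (real \<Rightarrow> real^'n \<Rightarrow> 'u \<Rightarrow> 'v \<Rightarrow> real^'d^'n) \<Rightarrow>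
   (real \<Rightarrow> real^'n \<Rightarrow> real \<Rightarrow> real^'d \<Rightarrow> 'u \<Rightarrow> 'v \<Rightarrow> real) \<Rightarrow>
   real \<Rightarrow> real^'n \<Rightarrow> real \<Rightarrow> real^'n \<Rightarrow> real^'n^'n \<Rightarrow> 'u \<Rightarrow> 'v \<Rightarrow> real" where
  "ham_int b \<sigma> f t x y q X u v =
     (1/2) * trace (\<sigma> t x u v ** transpose (\<sigma> t x u v) ** X) + q \<bullet> b t x u v
     + f t x y (q v* \<sigma> t x u v) u v"

definition Hminus ::
  "'u set \<Rightarrow> 'v set \<Rightarrow>
   (real \<Rightarrow> real^'n \<Rightarrow> 'u \<Rightarrow> 'v \<Rightarrow> real^'n) \<Rightarrow>
   (real \<Rightarrow> real^'n \<Rightarrow> 'u \<Rightarrow> 'v \<Rightarrow> real^'d^'n) \<Rightarrow>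
   (real \<Rightarrow> real^'n \<Rightarrow> real \<Rightarrow> real^'d \<Rightarrow> 'u \<Rightarrow> 'v \<Rightarrow> real) \<Rightarrow>
   real \<Rightarrow> real^'n \<Rightarrow> real \<Rightarrow> real^'n \<Rightarrow> real^'n^'n \<Rightarrow> real" where
  "Hminus U V b \<sigma> f t x y q X = (SUP u\<in>U. INF v\<in>V. ham_int b \<sigma> f t x y q X u v)"

definition Hpen ::
  "'u set \<Rightarrow> 'v set \<Rightarrow>
   (real \<Rightarrow> real^'n \<Rightarrow> 'u \<Rightarrow> 'v \<Rightarrow> real^'n) \<Rightarrow>
   (real \<Rightarrow> real^'n \<Rightarrow> 'u \<Rightarrow> 'v \<Rightarrow> real^'d^'n) \<Rightarrow>
   (real \<Rightarrow> real^'n \<Rightarrow> real \<Rightarrow> real^'d \<Rightarrow> 'u \<Rightarrow> 'v \<Rightarrow> real) \<Rightarrow>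
   (real \<Rightarrow> real^'n \<Rightarrow> real) \<Rightarrow> nat \<Rightarrow>
   real \<Rightarrow> real^'n \<Rightarrow> real \<Rightarrow> real^'n \<Rightarrow> real^'n^'n \<Rightarrow> real" where
  "Hpen U V b \<sigma> f h m t x y q X =
     (SUP u\<in>U. INF v\<in>V. ham_int b \<sigma> f t x y q X u v + real m * max 0 (h t x - y))"

definition loc_min :: "real \<Rightarrow> (real \<Rightarrow> real^'n \<Rightarrow> real) \<Rightarrow> (real \<times> (real^'n) \<Rightarrow> real)
                       \<Rightarrow> real \<Rightarrow> real^'n \<Rightarrow> bool" where
  "loc_min T w \<phi> t x \<longleftrightarrow> (\<exists>\<delta>>0. \<forall>s y. s \<in> {0..T} \<and> dist (s, y) (t, x) < \<delta> \<longrightarrow>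
       w s y - \<phi> (s, y) \<ge> w t x - \<phi> (t, x))"

definition loc_max :: "real \<Rightarrow> (real \<Rightarrow> real^'n \<Rightarrow> real) \<Rightarrow> (real \<times> (real^'n) \<Rightarrow> real)
                       \<Rightarrow> real \<Rightarrow> real^'n \<Rightarrow> bool" where
  "loc_max T w \<phi> t x \<longleftrightarrow> (\<exists>\<delta>>0. \<forall>s y. s \<in> {0..T} \<and> dist (s, y) (t, x) < \<delta> \<longrightarrow>
       w s y - \<phi> (s, y) \<le> w t x - \<phi> (t, x))"

definition lsc_on :: "real \<Rightarrow> (real \<Rightarrow> real^'n \<Rightarrow> real) \<Rightarrow> bool" where
  "lsc_on T w \<longleftrightarrow> (\<forall>t\<in>{0..T}. \<forall>x. \<forall>e>0. \<exists>\<delta>>0. \<forall>s y. s \<in> {0..T} \<and>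
       dist (s, y) (t, x) < \<delta> \<longrightarrow> w s y > w t x - e)"

definition visc_sol_pen where
  "visc_sol_pen T U V b \<sigma> f h \<Phi> m W \<longleftrightarrow>
     (\<forall>x. W T x = \<Phi> x) \<and>
     (\<forall>\<phi> t x. C3lb \<phi> \<and> 0 \<le> t \<and> t < T \<and> loc_max T W \<phi> t x \<longrightarrow>
        - dt \<phi> t x - Hpen U V b \<sigma> f h m t x (W t x) (Dx \<phi> t x) (D2x \<phi> t x) \<le> 0) \<and>
     (\<forall>\<phi> t x. C3lb \<phi> \<and> 0 \<le> t \<and> t < T \<and> loc_min T W \<phi> t x \<longrightarrow>
        - dt \<phi> t x - Hpen U V b \<sigma> f h m t x (W t x) (Dx \<phi> t x) (D2x \<phi> t x) \<ge> 0)"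

definition visc_super_obst where
  "visc_super_obst T U V b \<sigma> f h \<Phi> w \<longleftrightarrow>
     lsc_on T w \<and>
     (\<forall>x. w T x \<ge> \<Phi> x) \<and>
     (\<forall>\<phi> t x. C3lb \<phi> \<and> 0 \<le> t \<and> t < T \<and> loc_min T w \<phi> t x \<longrightarrow>
        min (w t x - h t x)
            (- dt \<phi> t x - Hminus U V b \<sigma> f t x (w t x) (Dx \<phi> t x) (D2x \<phi> t x)) \<ge> 0)"

end

theory Submission
  imports Defs
begin

text \<open>
  Lower semicontinuity of \<open>Wt\<close> and the terminal inequality are immediate from the
  monotone convergence.  For the supersolution inequality at a point \<open>z0 = (t0, x0)\<close> where
  \<open>Wt - \<phi>\<close> has a local minimum, we subtract from \<open>\<phi>\<close> the smooth bump
  \<open>psi z0 z = \<Sum>k. (1 - cos ((z - z0) \<bullet> k))\<^sup>2\<close>, which vanishes to second order at \<open>z0\<close> only,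
  so the minimum becomes strict and the jet of the test function at \<open>z0\<close> is unchanged.
  Minimisers of \<open>W m - (\<phi> - psi z0)\<close> on a small compact neighbourhood then converge to
  \<open>z0\<close> along a subsequence, with \<open>W m\<close> converging to \<open>Wt z0\<close> along them (Barles--Perthame).
  At those points the penalised equation holds; since the penalty term is multiplied by
  \<open>m \<rightarrow> \<infinity>\<close> while everything else converges, the limit gives both \<open>Wt \<ge> h\<close> and
  \<open>-\<partial>\<^sub>t\<phi> - H\<^sup>- \<ge> 0\<close>.
\<close>

text \<open>The one-dimensional bump \<open>(1 - cos r)\<^sup>2\<close>: nonnegative, zero at \<open>0\<close> to second order,
  with bounded derivatives of all orders (listed as \<open>bump1\<close>, \<open>bump2\<close>, \<open>bump3\<close>).\<close>
definition bump :: "real \<Rightarrow> real" where "bump r = (1 - cos r)\<^sup>2"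
definition bump1 :: "real \<Rightarrow> real" where "bump1 r = 2 * sin r - sin (2 * r)"
definition bump2 :: "real \<Rightarrow> real" where "bump2 r = 2 * cos r - 2 * cos (2 * r)"
definition bump3 :: "real \<Rightarrow> real" where "bump3 r = 4 * sin (2 * r) - 2 * sin r"

lemma bump_derivs:
  "(bump has_real_derivative bump1 r) (at r)"
  "(bump1 has_real_derivative bump2 r) (at r)"
  "(bump2 has_real_derivative bump3 r) (at r)"
proof -
  have bump_cos: "bump = (\<lambda>r. 3/2 - 2 * cos r + cos (2 * r) / 2)"
    unfolding fun_eq_iff bump_def cos_double_cos by (simp add: power2_eq_square field_simps)
  show "(bump has_real_derivative bump1 r) (at r)"
    unfolding bump_cos bump1_def by (auto intro!: derivative_eq_intros)
  show "(bump1 has_real_derivative bump2 r) (at r)" "(bump2 has_real_derivative bump3 r) (at r)"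
    unfolding bump1_def bump2_def bump3_def by (auto intro!: derivative_eq_intros)
qed

lemma bump_derivs_bounded: "\<bar>bump1 r\<bar> \<le> 3" "\<bar>bump2 r\<bar> \<le> 4" "\<bar>bump3 r\<bar> \<le> 6"
  unfolding bump1_def bump2_def bump3_def
  using abs_sin_le_one[of r] abs_sin_le_one[of "2*r"] abs_cos_le_one[of r] abs_cos_le_one[of "2*r"]
  by linarith+

lemma bump_zero_iff: assumes "\<bar>r\<bar> < 2 * pi" shows "bump r = 0 \<longleftrightarrow> r = 0"
proof
  assume "bump r = 0"
  then have "cos r = 1" by (simp add: bump_def)
  then obtain n :: int where n: "r = of_int n * 2 * pi" using cos_one_2pi_int by blast
  with assms have "n = 0" by (cases "n = 0") (auto simp: abs_mult)
  with n show "r = 0" by simp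
qed (simp add: bump_def)

text \<open>The multilinear maps \<open>v \<mapsto> v \<bullet> k\<close>, \<open>(v, w) \<mapsto> (v \<bullet> k)(w \<bullet> k)\<close> and the trilinear analogue,
  as bounded linear maps; they are the derivatives of a profile \<open>g ((z - z0) \<bullet> k)\<close>.\<close>
definition lin1 :: "'a::real_inner \<Rightarrow> 'a \<Rightarrow>\<^sub>L real" where
  "lin1 k = blinfun_inner_left k"
definition lin2 :: "'a::real_inner \<Rightarrow> 'a \<Rightarrow>\<^sub>L ('a \<Rightarrow>\<^sub>L real)" where
  "lin2 k = blinfun_scaleR_left (lin1 k) o\<^sub>L lin1 k"
definition lin3 :: "'a::real_inner \<Rightarrow> 'a \<Rightarrow>\<^sub>L ('a \<Rightarrow>\<^sub>L ('a \<Rightarrow>\<^sub>L real))" where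
  "lin3 k = blinfun_scaleR_left (lin2 k) o\<^sub>L lin1 k"

lemma lin_apply [simp]:
  "blinfun_apply (lin1 k) v = v \<bullet> k"
  "blinfun_apply (lin2 k) v = (v \<bullet> k) *\<^sub>R lin1 k"
  "blinfun_apply (lin3 k) v = (v \<bullet> k) *\<^sub>R lin2 k"
  by (simp_all add: lin1_def lin2_def lin3_def)

lemma has_derivative_profile:
  fixes M :: "'b::real_normed_vector" and z0 k :: "'a::real_inner"
  assumes "\<And>r. (g has_real_derivative g' r) (at r)"
  shows "((\<lambda>z. g ((z - z0) \<bullet> k) *\<^sub>R M) has_derivative
           (\<lambda>v. (g' ((z - z0) \<bullet> k) * (v \<bullet> k)) *\<^sub>R M)) (at z)"
proof -
  have "((\<lambda>z. (z - z0) \<bullet> k) has_derivative (\<lambda>v. v \<bullet> k)) (at z)"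
    by (auto intro!: derivative_eq_intros)
  from has_derivative_compose[OF this assms[of "(z - z0) \<bullet> k", unfolded has_field_derivative_def]]
  have "((\<lambda>z. g ((z - z0) \<bullet> k)) has_derivative (\<lambda>v. g' ((z - z0) \<bullet> k) * (v \<bullet> k))) (at z)"
    by (simp add: o_def)
  from has_derivative_scaleR_left[OF this, of M] show ?thesis by (simp add: o_def)
qed

lemma bounded_range_profile_sum:
  fixes M :: "'a::euclidean_space \<Rightarrow> 'b::real_normed_vector"
  assumes "\<And>r. \<bar>g r\<bar> \<le> c"
  shows "bounded (range (\<lambda>z. \<Sum>k\<in>Basis. g ((z - z0) \<bullet> k) *\<^sub>R M k))"
proof -
  have "norm (\<Sum>k\<in>Basis. g ((z - z0) \<bullet> k) *\<^sub>R M k) \<le> (\<Sum>k\<in>Basis. c * norm (M k))" for z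
    by (rule order_trans[OF norm_sum sum_mono]) (simp add: assms mult_right_mono)
  then show ?thesis unfolding bounded_iff by blast
qed

lemma has_derivative_profile_sum:
  fixes M :: "'a::euclidean_space \<Rightarrow> 'b::real_normed_vector"
  assumes "\<And>r. (g has_real_derivative g' r) (at r)"
    and "\<And>k v. blinfun_apply (L k) v = (v \<bullet> k) *\<^sub>R M k"
  shows "((\<lambda>z. \<Sum>k\<in>Basis. g ((z - z0) \<bullet> k) *\<^sub>R M k) has_derivative
           blinfun_apply (\<Sum>k\<in>Basis. g' ((z - z0) \<bullet> k) *\<^sub>R L k)) (at z)"
proof -
  have "((\<lambda>z. \<Sum>k\<in>Basis. g ((z - z0) \<bullet> k) *\<^sub>R M k) has_derivative
        (\<lambda>v. \<Sum>k\<in>Basis. (g' ((z - z0) \<bullet> k) * (v \<bullet> k)) *\<^sub>R M k)) (at z)"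
    by (intro has_derivative_sum has_derivative_profile assms(1))
  moreover have "(\<lambda>v. \<Sum>k\<in>Basis. (g' ((z - z0) \<bullet> k) * (v \<bullet> k)) *\<^sub>R M k)
      = blinfun_apply (\<Sum>k\<in>Basis. g' ((z - z0) \<bullet> k) *\<^sub>R L k)"
    by (auto simp: fun_eq_iff blinfun.sum_left blinfun.scaleR_left assms(2) intro!: sum.cong)
  ultimately show ?thesis by simp
qed

definition psi :: "'a::euclidean_space \<Rightarrow> 'a \<Rightarrow> real" where
  "psi z0 z = (\<Sum>k\<in>Basis. bump ((z - z0) \<bullet> k))"
definition psi_D1 :: "'a::euclidean_space \<Rightarrow> 'a \<Rightarrow> 'a \<Rightarrow>\<^sub>L real" where
  "psi_D1 z0 z = (\<Sum>k\<in>Basis. bump1 ((z - z0) \<bullet> k) *\<^sub>R lin1 k)"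
definition psi_D2 :: "'a::euclidean_space \<Rightarrow> 'a \<Rightarrow> 'a \<Rightarrow>\<^sub>L ('a \<Rightarrow>\<^sub>L real)" where
  "psi_D2 z0 z = (\<Sum>k\<in>Basis. bump2 ((z - z0) \<bullet> k) *\<^sub>R lin2 k)"
definition psi_D3 :: "'a::euclidean_space \<Rightarrow> 'a \<Rightarrow> 'a \<Rightarrow>\<^sub>L ('a \<Rightarrow>\<^sub>L ('a \<Rightarrow>\<^sub>L real))" where
  "psi_D3 z0 z = (\<Sum>k\<in>Basis. bump3 ((z - z0) \<bullet> k) *\<^sub>R lin3 k)"

lemma psi_derivatives:
  "(psi z0 has_derivative blinfun_apply (psi_D1 z0 z)) (at z)"
  "(psi_D1 z0 has_derivative blinfun_apply (psi_D2 z0 z)) (at z)"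
  "(psi_D2 z0 has_derivative blinfun_apply (psi_D3 z0 z)) (at z)"
proof -
  have "((\<lambda>z. \<Sum>k\<in>Basis. bump ((z - z0) \<bullet> k) *\<^sub>R (1::real)) has_derivative
        blinfun_apply (psi_D1 z0 z)) (at z)"
    unfolding psi_D1_def by (rule has_derivative_profile_sum[OF bump_derivs(1)]) simp
  then show "(psi z0 has_derivative blinfun_apply (psi_D1 z0 z)) (at z)"
    by (simp add: psi_def[abs_def])
  show "(psi_D1 z0 has_derivative blinfun_apply (psi_D2 z0 z)) (at z)"
    unfolding psi_D1_def[abs_def] psi_D2_def
    by (rule has_derivative_profile_sum[OF bump_derivs(2)]) simp
  show "(psi_D2 z0 has_derivative blinfun_apply (psi_D3 z0 z)) (at z)"
    unfolding psi_D2_def[abs_def] psi_D3_def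
    by (rule has_derivative_profile_sum[OF bump_derivs(3)]) simp
qed

text \<open>The bump and its first two derivatives vanish at the centre, so subtracting it
  does not change the jet of a test function there.\<close>
lemma psi_centre: "psi z0 z0 = 0" "psi_D1 z0 z0 = 0" "psi_D2 z0 z0 = 0"
  by (simp_all add: psi_def psi_D1_def psi_D2_def bump_def bump1_def bump2_def)

lemma psi_nonneg: "psi z0 z \<ge> 0"
  unfolding psi_def bump_def by (intro sum_nonneg) simp

text \<open>Within distance \<open>1\<close> of the centre the bump is positive except at the centre;
  this is what makes the perturbed minimum strict.\<close>
lemma psi_zero_near_centre:
  assumes "psi z0 z \<le> 0" "norm (z - z0) < 1"
  shows "z = z0"
proof -
  have "psi z0 z = 0" using assms(1) psi_nonneg[of z0 z] by linarith
  then have "bump ((z - z0) \<bullet> k) = 0" if "k \<in> Basis" for k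
    using that unfolding psi_def by (subst (asm) sum_nonneg_eq_0_iff) (auto simp: bump_def)
  moreover have "\<bar>(z - z0) \<bullet> k\<bar> < 2 * pi" if "k \<in> Basis" for k
    using Basis_le_norm[OF that, of "z - z0"] assms(2) pi_gt3 by linarith
  ultimately have "\<forall>k\<in>Basis. (z - z0) \<bullet> k = 0" using bump_zero_iff by blast
  then show ?thesis by (simp add: euclidean_all_zero_iff)
qed

lemma bounded_range_diff:
  fixes g k :: "'a \<Rightarrow> 'b::real_normed_vector"
  assumes "bounded (range g)" "bounded (range k)"
  shows "bounded (range (\<lambda>z. g z - k z))"
proof -
  obtain B1 B2 where "\<forall>z. norm (g z) \<le> B1" "\<forall>z. norm (k z) \<le> B2"
    using assms unfolding bounded_iff by blast
  then have "\<forall>z. norm (g z - k z) \<le> B1 + B2" by (meson add_mono norm_triangle_ineq4 order.trans)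
  then show ?thesis unfolding bounded_iff by blast
qed

lemma C3lb_diff:
  assumes "C3lb \<phi>" "C3lb \<psi>"
  shows "C3lb (\<lambda>z. \<phi> z - \<psi> z)"
proof -
  obtain D1 D2 D3 where D: "\<forall>z. (\<phi> has_derivative blinfun_apply (D1 z)) (at z)"
     "\<forall>z. (D1 has_derivative blinfun_apply (D2 z)) (at z)"
     "\<forall>z. (D2 has_derivative blinfun_apply (D3 z)) (at z)"
     "continuous_on UNIV D3" "bounded (range D1)" "bounded (range D2)" "bounded (range D3)"
    using assms(1) unfolding C3lb_def by blast
  obtain E1 E2 E3 where E: "\<forall>z. (\<psi> has_derivative blinfun_apply (E1 z)) (at z)"
     "\<forall>z. (E1 has_derivative blinfun_apply (E2 z)) (at z)"
     "\<forall>z. (E2 has_derivative blinfun_apply (E3 z)) (at z)"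
     "continuous_on UNIV E3" "bounded (range E1)" "bounded (range E2)" "bounded (range E3)"
    using assms(2) unfolding C3lb_def by blast
  have "((\<lambda>z. \<phi> z - \<psi> z) has_derivative blinfun_apply (D1 z - E1 z)) (at z)"
    "((\<lambda>z. D1 z - E1 z) has_derivative blinfun_apply (D2 z - E2 z)) (at z)"
    "((\<lambda>z. D2 z - E2 z) has_derivative blinfun_apply (D3 z - E3 z)) (at z)" for z
    using has_derivative_diff[OF D(1)[rule_format] E(1)[rule_format]]
      has_derivative_diff[OF D(2)[rule_format] E(2)[rule_format]]
      has_derivative_diff[OF D(3)[rule_format] E(3)[rule_format]]
    by (simp_all add: minus_blinfun.rep_eq fun_diff_def)
  moreover have "continuous_on UNIV (\<lambda>z. D3 z - E3 z)"
    using D(4) E(4) by (intro continuous_intros)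
  ultimately show ?thesis unfolding C3lb_def
    using D(5-7) E(5-7) by (intro exI[of _ "\<lambda>z. D1 z - E1 z"] exI[of _ "\<lambda>z. D2 z - E2 z"]
        exI[of _ "\<lambda>z. D3 z - E3 z"]) (auto intro: bounded_range_diff)
qed

lemma C3lb_continuous: "C3lb \<phi> \<Longrightarrow> continuous_on S \<phi>"
  unfolding C3lb_def by (metis continuous_at_imp_continuous_on has_derivative_continuous)

lemma C3lb_psi: "C3lb (psi (z0 :: real \<times> (real^'n)))"
  unfolding C3lb_def
proof (intro exI conjI allI)
  show "continuous_on UNIV (psi_D3 z0)"
    unfolding psi_D3_def[abs_def] bump3_def by (intro continuous_intros)
  show "bounded (range (psi_D1 z0))" "bounded (range (psi_D2 z0))" "bounded (range (psi_D3 z0))"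
    unfolding psi_D1_def[abs_def] psi_D2_def[abs_def] psi_D3_def[abs_def]
    by (rule bounded_range_profile_sum, rule bump_derivs_bounded)+
qed (rule psi_derivatives)+

lemma jet_formulas:
  fixes \<phi> :: "real \<times> (real^'n) \<Rightarrow> real"
  assumes d1: "\<And>z. (\<phi> has_derivative blinfun_apply (D1 z)) (at z)"
    and d2: "\<And>z. (D1 has_derivative blinfun_apply (D2 z)) (at z)"
  shows "dt \<phi> t x = D1 (t, x) (1, 0)"
    "Dx \<phi> t x = (\<chi> i. D1 (t, x) (0, axis i 1))"
    "D2x \<phi> t x = (\<chi> i j. D2 (t, x) (0, axis i 1) (0, axis j 1))"
proof -
  have fd: "frechet_derivative \<phi> (at w) = blinfun_apply (D1 w)" for w
    using frechet_derivative_at[OF d1[of w]] by simp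
  show "dt \<phi> t x = D1 (t, x) (1, 0)" "Dx \<phi> t x = (\<chi> i. D1 (t, x) (0, axis i 1))"
    by (simp_all add: dt_def Dx_def fd)
  have "((\<lambda>w. blinfun_apply (D1 w) e) has_derivative (\<lambda>v. blinfun_apply (D2 z v) e)) (at z)" for e z
    by (rule has_derivative_eq_rhs, rule blinfun.FDERIV[OF d2 has_derivative_const]) auto
  then have "frechet_derivative (\<lambda>w. blinfun_apply (D1 w) e) (at z) = (\<lambda>v. blinfun_apply (D2 z v) e)" for e z
    using frechet_derivative_at by metis
  then show "D2x \<phi> t x = (\<chi> i j. D2 (t, x) (0, axis i 1) (0, axis j 1))"
    by (simp add: D2x_def fd)
qed

lemma jets_diff_psi_at_centre:
  fixes \<phi> :: "real \<times> (real^'n) \<Rightarrow> real" and t0 :: real and x0 :: "real^'n"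
  assumes "C3lb \<phi>"
  defines "\<phi>' \<equiv> \<lambda>z. \<phi> z - psi (t0, x0) z"
  shows "dt \<phi>' t0 x0 = dt \<phi> t0 x0" "Dx \<phi>' t0 x0 = Dx \<phi> t0 x0" "D2x \<phi>' t0 x0 = D2x \<phi> t0 x0"
proof -
  obtain D1 D2 where D: "\<And>z. (\<phi> has_derivative blinfun_apply (D1 z)) (at z)"
     "\<And>z. (D1 has_derivative blinfun_apply (D2 z)) (at z)"
    using assms(1) unfolding C3lb_def by blast
  let ?z0 = "(t0, x0)"
  have "(\<phi>' has_derivative blinfun_apply (D1 z - psi_D1 ?z0 z)) (at z)"
    "((\<lambda>z. D1 z - psi_D1 ?z0 z) has_derivative blinfun_apply (D2 z - psi_D2 ?z0 z)) (at z)" for z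
    using has_derivative_diff[OF D(1) psi_derivatives(1)] has_derivative_diff[OF D(2) psi_derivatives(2)]
    by (simp_all add: \<phi>'_def minus_blinfun.rep_eq fun_diff_def)
  from jet_formulas[OF this] jet_formulas[OF D] show
    "dt \<phi>' t0 x0 = dt \<phi> t0 x0" "Dx \<phi>' t0 x0 = Dx \<phi> t0 x0" "D2x \<phi>' t0 x0 = D2x \<phi> t0 x0"
    by (simp_all add: psi_centre)
qed

lemma C3lb_jets_tendsto:
  assumes "C3lb \<phi>" and lim: "((\<lambda>s. (t s, x s)) \<longlongrightarrow> (t0, x0)) F"
  shows "((\<lambda>s. dt \<phi> (t s) (x s)) \<longlongrightarrow> dt \<phi> t0 x0) F"
    "((\<lambda>s. Dx \<phi> (t s) (x s)) \<longlongrightarrow> Dx \<phi> t0 x0) F"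
    "((\<lambda>s. D2x \<phi> (t s) (x s)) \<longlongrightarrow> D2x \<phi> t0 x0) F"
proof -
  obtain D1 D2 D3 where D: "\<And>z. (\<phi> has_derivative blinfun_apply (D1 z)) (at z)"
     "\<And>z. (D1 has_derivative blinfun_apply (D2 z)) (at z)"
     "\<And>z. (D2 has_derivative blinfun_apply (D3 z)) (at z)"
    using assms(1) unfolding C3lb_def by blast
  have D1_lim: "((\<lambda>s. D1 (t s, x s)) \<longlongrightarrow> D1 (t0, x0)) F"
    by (rule isCont_tendsto_compose[OF has_derivative_continuous[OF D(2)] lim])
  have D2_lim: "((\<lambda>s. D2 (t s, x s)) \<longlongrightarrow> D2 (t0, x0)) F"
    by (rule isCont_tendsto_compose[OF has_derivative_continuous[OF D(3)] lim])
  show "((\<lambda>s. dt \<phi> (t s) (x s)) \<longlongrightarrow> dt \<phi> t0 x0) F"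
    "((\<lambda>s. Dx \<phi> (t s) (x s)) \<longlongrightarrow> Dx \<phi> t0 x0) F"
    "((\<lambda>s. D2x \<phi> (t s) (x s)) \<longlongrightarrow> D2x \<phi> t0 x0) F"
    unfolding jet_formulas[OF D(1,2)]
    by (intro tendsto_vec_lambda blinfun.tendsto[OF D1_lim tendsto_const]
          blinfun.tendsto[OF blinfun.tendsto[OF D2_lim tendsto_const] tendsto_const])+
qed

text \<open>This turns "continuous in \<open>(t, u, v)\<close>, Lipschitz in \<open>x\<close>" into joint continuity.\<close>
lemma tendsto_param_modulus:
  fixes g :: "'p \<Rightarrow> 'a::topological_space \<Rightarrow> 'b::real_normed_vector"
  assumes cont: "continuous_on S (g p\<^sub>0)" and a0: "a0 \<in> S"
    and a_lim: "(a \<longlongrightarrow> a0) F" and a_in: "eventually (\<lambda>s. a s \<in> S) F"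
    and modulus: "eventually (\<lambda>s. norm (g (p s) (a s) - g p\<^sub>0 (a s)) \<le> e s) F"
    and e_lim: "(e \<longlongrightarrow> 0) F"
  shows "((\<lambda>s. g (p s) (a s)) \<longlongrightarrow> g p\<^sub>0 a0) F"
proof -
  have "((\<lambda>s. g (p s) (a s) - g p\<^sub>0 (a s)) \<longlongrightarrow> 0) F"
    using modulus e_lim by (rule Lim_null_comparison)
  moreover have "((\<lambda>s. g p\<^sub>0 (a s)) \<longlongrightarrow> g p\<^sub>0 a0) F"
    by (rule continuous_on_tendsto_compose[OF cont a_lim a0 a_in])
  ultimately have "((\<lambda>s. (g (p s) (a s) - g p\<^sub>0 (a s)) + g p\<^sub>0 (a s)) \<longlongrightarrow> 0 + g p\<^sub>0 a0) F"
    by (rule tendsto_add)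
  then show ?thesis by simp
qed

lemma tendsto_scaled_distance:
  fixes x :: "'a \<Rightarrow> 'b::real_normed_vector"
  shows "(x \<longlongrightarrow> x0) F \<Longrightarrow> ((\<lambda>s. L * norm (x s - x0)) \<longlongrightarrow> 0) F"
  by (intro tendsto_mult_right_zero tendsto_norm_zero LIM_zero)

lemma supinf_le:
  fixes g k :: "'u \<Rightarrow> 'v \<Rightarrow> real"
  assumes ne: "U \<noteq> {}" "V \<noteq> {}"
    and bounded: "\<forall>u\<in>U. \<forall>v\<in>V. \<bar>g u v\<bar> \<le> B \<and> \<bar>k u v\<bar> \<le> B"
    and le: "\<forall>u\<in>U. \<forall>v\<in>V. g u v \<le> k u v + e"
  shows "(SUP u\<in>U. INF v\<in>V. g u v) \<le> (SUP u\<in>U. INF v\<in>V. k u v) + e"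
proof -
  have below: "bdd_below (g u ` V)" "bdd_below (k u ` V)" if "u \<in> U" for u
    using bounded that by (auto intro!: bdd_belowI[of _ "-B"] dest!: bspec simp: abs_le_iff)
  obtain v0 where v0: "v0 \<in> V" using ne by blast
  have "(INF v\<in>V. k u v) \<le> B" if "u \<in> U" for u
    using cINF_lower[OF below(2)[OF that] v0] bounded that v0 by force
  then have above: "bdd_above ((\<lambda>u. INF v\<in>V. k u v) ` U)" by (intro bdd_aboveI) auto
  have "(INF v\<in>V. g u v) \<le> (SUP u\<in>U. INF v\<in>V. k u v) + e" if u: "u \<in> U" for u
  proof -
    have "(INF v\<in>V. g u v) - e \<le> (INF v\<in>V. k u v)"
    proof (rule cINF_greatest[OF ne(2)])
      fix v assume "v \<in> V"
      then show "(INF v\<in>V. g u v) - e \<le> k u v"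
        using cINF_lower[OF below(1)[OF u]] le u by force
    qed
    also have "\<dots> \<le> (SUP u\<in>U. INF v\<in>V. k u v)" by (rule cSUP_upper[OF u above])
    finally show ?thesis by simp
  qed
  then show ?thesis by (intro cSUP_least ne(1))
qed

text \<open>\<open>sup\<^sub>u inf\<^sub>v G(a, u, v)\<close> is continuous in \<open>a\<close> when \<open>G\<close> is jointly continuous and the
  control sets are compact: uniform continuity on compacts gives a uniform estimate.\<close>
lemma supinf_tendsto:
  fixes G :: "'a::heine_borel \<times> ('u::metric_space \<times> 'v::metric_space) \<Rightarrow> real"
  assumes cont: "continuous_on (S \<times> (U \<times> V)) G" and S: "closed S"
    and U: "compact U" "U \<noteq> {}" and V: "compact V" "V \<noteq> {}"
    and a0: "a0 \<in> S" and a_lim: "(a \<longlongrightarrow> a0) F" and a_in: "eventually (\<lambda>s. a s \<in> S) F"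
  shows "((\<lambda>s. SUP u\<in>U. INF v\<in>V. G (a s, (u, v))) \<longlongrightarrow> (SUP u\<in>U. INF v\<in>V. G (a0, (u, v)))) F"
proof (rule tendstoI)
  fix e :: real assume e: "e > 0"
  let ?C = "(S \<inter> cball a0 1) \<times> (U \<times> V)"
  have C: "compact ?C" using S U V by (intro compact_Times closed_Int_compact) auto
  have contC: "continuous_on ?C G" by (rule continuous_on_subset[OF cont]) auto
  obtain B where B: "\<forall>p\<in>?C. \<bar>G p\<bar> \<le> B"
    using compact_imp_bounded[OF compact_continuous_image[OF contC C]]
    unfolding bounded_iff by auto
  obtain d where d: "d > 0" "\<forall>p\<in>?C. \<forall>p'\<in>?C. dist p' p < d \<longrightarrow> dist (G p') (G p) < e/2"
    using compact_uniformly_continuous[OF contC C] e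
    unfolding uniformly_continuous_on_def by (meson half_gt_zero)
  have "eventually (\<lambda>s. dist (a s) a0 < min d 1) F"
    using a_lim d(1) by (intro tendstoD) auto
  with a_in show "eventually (\<lambda>s. dist (SUP u\<in>U. INF v\<in>V. G (a s, (u, v)))
                                     (SUP u\<in>U. INF v\<in>V. G (a0, (u, v))) < e) F"
  proof eventually_elim
    case (elim s)
    have in_C: "(a s, (u, v)) \<in> ?C" "(a0, (u, v)) \<in> ?C" if "u \<in> U" "v \<in> V" for u v
      using elim a0 that by (auto simp: dist_commute)
    have "\<bar>G (a s, (u, v)) - G (a0, (u, v))\<bar> < e/2" if "u \<in> U" "v \<in> V" for u v
      using d(2) in_C[OF that] elim by (auto simp: dist_Pair_Pair dist_real_def)
    then have close: "\<forall>u\<in>U. \<forall>v\<in>V. G (a s, (u, v)) \<le> G (a0, (u, v)) + e/2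
                                    \<and> G (a0, (u, v)) \<le> G (a s, (u, v)) + e/2"
      by (smt (verit))
    have bnd: "\<forall>u\<in>U. \<forall>v\<in>V. \<bar>G (a s, (u, v))\<bar> \<le> B \<and> \<bar>G (a0, (u, v))\<bar> \<le> B"
      using in_C B by blast
    have "(SUP u\<in>U. INF v\<in>V. G (a s, (u, v))) \<le> (SUP u\<in>U. INF v\<in>V. G (a0, (u, v))) + e/2"
      using close bnd by (intro supinf_le[OF U(2) V(2)]) auto
    moreover have "(SUP u\<in>U. INF v\<in>V. G (a0, (u, v))) \<le> (SUP u\<in>U. INF v\<in>V. G (a s, (u, v))) + e/2"
      using close bnd by (intro supinf_le[OF U(2) V(2)]) auto
    ultimately show ?case using e by (simp add: dist_real_def)
  qed
qed

lemma diagonal_limit_of_increasing: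
  fixes w :: "nat \<Rightarrow> 'a::topological_space \<Rightarrow> real"
  assumes inc: "\<And>z. z \<in> K \<Longrightarrow> incseq (\<lambda>m. w m z)" and cont: "\<And>m. continuous_on K (w m)"
    and p: "\<And>j. p j \<in> K" "p \<longlonglongrightarrow> z0" "z0 \<in> K"
    and M: "filterlim M at_top sequentially" and lim: "(\<lambda>m. w m z0) \<longlonglongrightarrow> L"
    and upper: "\<And>j. w (M j) (p j) \<le> c j" and c: "c \<longlonglongrightarrow> L"
  shows "(\<lambda>j. w (M j) (p j)) \<longlonglongrightarrow> L"
proof (rule tendstoI)
  fix e :: real assume e: "e > 0"
  have "L - e/2 < L" using e by simp
  from eventually_happens'[OF sequentially_bot order_tendstoD(1)[OF lim this]]
  obtain k where k: "L - e/2 < w k z0" by blast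
  have "(\<lambda>j. w k (p j)) \<longlonglongrightarrow> w k z0"
    by (rule continuous_on_tendsto_compose[OF cont p(2,3)]) (use p(1) in simp)
  moreover have "L - e < w k z0" using k e by simp
  ultimately have "eventually (\<lambda>j. L - e < w k (p j)) sequentially"
    by (rule order_tendstoD(1))
  moreover have "eventually (\<lambda>j. k \<le> M j) sequentially"
    using M by (simp add: filterlim_at_top)
  moreover have "eventually (\<lambda>j. c j < L + e) sequentially"
    using e by (intro order_tendstoD(2)[OF c]) simp
  ultimately show "eventually (\<lambda>j. dist (w (M j) (p j)) L < e) sequentially"
  proof eventually_elim
    case (elim j)
    have "w k (p j) \<le> w (M j) (p j)" using incseqD[OF inc[OF p(1)] elim(2)] .
    then show ?case using elim(1,3) upper[of j] by (simp add: dist_real_def abs_less_iff)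
  qed
qed

lemma penalised_limit:
  fixes a b c :: "nat \<Rightarrow> real"
  assumes ineq: "eventually (\<lambda>j. a j + real (M j) * max 0 (c j) \<le> b j) sequentially"
    and lim: "a \<longlonglongrightarrow> A" "b \<longlonglongrightarrow> B" "c \<longlonglongrightarrow> C" and M: "filterlim M at_top sequentially"
  shows "A \<le> B" "C \<le> 0"
proof -
  have "eventually (\<lambda>j. a j \<le> b j) sequentially"
    using ineq
  proof eventually_elim
    case (elim j)
    have "0 \<le> real (M j) * max 0 (c j)" by simp
    with elim show ?case by linarith
  qed
  then show "A \<le> B" using lim(1,2) by (intro tendsto_le[OF trivial_limit_sequentially]) auto
  show "C \<le> 0"
  proof (rule ccontr)
    assume "\<not> C \<le> 0"
    then have C: "C/2 > 0" by simp
    have "eventually (\<lambda>j. C/2 < c j) sequentially"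
      using C by (intro order_tendstoD(1)[OF lim(3)]) simp
    moreover have "eventually (\<lambda>j. b j - a j < B - A + 1) sequentially"
      by (intro order_tendstoD(2)[OF tendsto_diff[OF lim(2,1)]]) simp
    moreover have "filterlim (\<lambda>j. real (M j)) at_top sequentially"
      by (rule filterlim_compose[OF filterlim_real_sequentially M])
    then have "eventually (\<lambda>j. (B - A + 1) / (C/2) < real (M j)) sequentially"
      by (simp add: filterlim_at_top_dense)
    ultimately have "eventually (\<lambda>j. False) sequentially"
      using ineq
    proof eventually_elim
      case (elim j)
      have "B - A + 1 < real (M j) * (C/2)" using elim(3) C by (simp add: field_simps)
      also have "\<dots> \<le> real (M j) * max 0 (c j)" using elim(1) by (intro mult_left_mono) auto
      finally show False using elim(2,4) by linarith
    qed
    then show False by simp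
  qed
qed

lemma minimisers_converge:
  fixes w :: "nat \<Rightarrow> 'a::metric_space \<Rightarrow> real" and g wl :: "'a \<Rightarrow> real"
  assumes K: "compact K" "z0 \<in> K"
    and cont: "\<And>m. continuous_on K (w m)" "continuous_on K g"
    and mono: "\<And>m z. z \<in> K \<Longrightarrow> w m z \<le> w (Suc m) z"
    and lim: "\<And>z. z \<in> K \<Longrightarrow> (\<lambda>m. w m z) \<longlonglongrightarrow> wl z"
    and strict: "\<And>z. z \<in> K \<Longrightarrow> wl z - g z \<le> wl z0 - g z0 \<Longrightarrow> z = z0"
  obtains M p where "strict_mono M" "\<And>j. p j \<in> K"
    "\<And>j q. q \<in> K \<Longrightarrow> w (M j) (p j) - g (p j) \<le> w (M j) q - g q"
    "p \<longlonglongrightarrow> z0" "(\<lambda>j. w (M j) (p j)) \<longlonglongrightarrow> wl z0"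
proof -
  have inc: "incseq (\<lambda>m. w m z)" if "z \<in> K" for z using mono[OF that] by (rule incseq_SucI)
  have "\<exists>p\<in>K. \<forall>q\<in>K. w m p - g p \<le> w m q - g q" for m
    using K by (intro continuous_attains_inf continuous_intros cont) auto
  then obtain pm where pm: "\<And>m. pm m \<in> K" "\<And>m q. q \<in> K \<Longrightarrow> w m (pm m) - g (pm m) \<le> w m q - g q"
    by metis
  obtain l M where l: "l \<in> K" "strict_mono M" "(pm \<circ> M) \<longlonglongrightarrow> l"
    using compact_imp_seq_compact[OF K(1)] pm(1) unfolding seq_compact_def by meson
  define p where "p = pm \<circ> M"
  have p_l: "p \<longlonglongrightarrow> l" using l(3) by (simp only: p_def)
  have p: "p j \<in> K" "\<And>q. q \<in> K \<Longrightarrow> w (M j) (p j) - g (p j) \<le> w (M j) q - g q" for j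
    using pm by (auto simp: p_def)
  have upper: "w (M j) (p j) - g (p j) \<le> wl z0 - g z0" for j
    using p(2)[OF K(2), of j] incseq_le[OF inc[OF K(2)] lim[OF K(2)], of "M j"] by linarith
  have "wl l - g l \<le> wl z0 - g z0"
  proof (rule LIMSEQ_le_const2[OF tendsto_diff[OF lim[OF l(1)] tendsto_const]], intro exI allI impI)
    fix k :: nat
    have "(\<lambda>j. w k (p j) - g (p j)) \<longlonglongrightarrow> w k l - g l"
      using p_l p(1) l(1)
      by (intro continuous_on_tendsto_compose[OF continuous_on_diff[OF cont]]) auto
    moreover have "w k (p j) - g (p j) \<le> wl z0 - g z0" if "j \<ge> k" for j
      using incseqD[OF inc[OF p(1)[of j]] order.trans[OF that seq_suble[OF l(2)]]] upper[of j] by linarith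
    ultimately show "w k l - g l \<le> wl z0 - g z0" by (intro LIMSEQ_le_const2) auto
  qed
  then have "l = z0" by (rule strict[OF l(1)])
  then have p_lim: "p \<longlonglongrightarrow> z0" using p_l by simp
  have "(\<lambda>j. w (M j) (p j)) \<longlonglongrightarrow> wl z0"
  proof (rule diagonal_limit_of_increasing[OF inc cont(1) p(1) p_lim K(2) filterlim_subseq[OF l(2)]
        lim[OF K(2)]])
    show "w (M j) (p j) \<le> wl z0 - g z0 + g (p j)" for j using upper[of j] by simp
    show "(\<lambda>j. wl z0 - g z0 + g (p j)) \<longlonglongrightarrow> wl z0"
      using continuous_on_tendsto_compose[OF cont(2) p_lim K(2)] p(1)
      by (auto intro: tendsto_eq_intros)
  qed
  with l(2) p p_lim show ?thesis using that by blast
qed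

lemma loc_min_at_interior_minimiser:
  fixes \<phi> :: "real \<times> (real^'n) \<Rightarrow> real"
  assumes min: "\<And>q. q \<in> ({0..T} \<times> UNIV) \<inter> cball z0 r \<Longrightarrow>
                     w (fst p) (snd p) - \<phi> p \<le> w (fst q) (snd q) - \<phi> q"
    and near: "dist p z0 < r"
  shows "loc_min T w \<phi> (fst p) (snd p)"
  unfolding loc_min_def
proof (intro exI[of _ "r - dist p z0"] conjI allI impI)
  fix s y assume sy: "s \<in> {0..T} \<and> dist (s, y) (fst p, snd p) < r - dist p z0"
  have "dist (s, y) z0 \<le> dist (s, y) p + dist p z0" by (rule dist_triangle)
  with sy have "(s, y) \<in> ({0..T} \<times> UNIV) \<inter> cball z0 r" by (auto simp: dist_commute)
  from min[OF this] show "w (fst p) (snd p) - \<phi> (fst p, snd p) \<le> w s y - \<phi> (s, y)" by simp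
qed (use near in simp)

text \<open>Subtracting the bump turns a local minimum of \<open>w - \<phi>\<close> at \<open>(t0, x0)\<close> into a strict
  minimum on a small neighbourhood (of radius below \<open>1\<close>, where the bump is positive).\<close>
lemma strict_minimum_after_bump:
  fixes \<phi> :: "real \<times> (real^'n) \<Rightarrow> real"
  assumes "loc_min T w \<phi> t0 x0"
  obtains r where "0 < r" "r < 1"
    "\<And>z. z \<in> ({0..T} \<times> UNIV) \<inter> cball (t0, x0) r \<Longrightarrow>
       w (fst z) (snd z) - (\<phi> z - psi (t0, x0) z) \<le> w t0 x0 - \<phi> (t0, x0) \<Longrightarrow> z = (t0, x0)"
proof -
  obtain \<delta> where \<delta>: "\<delta> > 0" "\<And>s y. s \<in> {0..T} \<Longrightarrow> dist (s, y) (t0, x0) < \<delta> \<Longrightarrow>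
      w s y - \<phi> (s, y) \<ge> w t0 x0 - \<phi> (t0, x0)"
    using assms unfolding loc_min_def by blast
  define r where "r = min (\<delta>/2) (1/2)"
  have r: "0 < r" "r < \<delta>" "r < 1" using \<delta> by (auto simp: r_def)
  have "z = (t0, x0)" if z: "z \<in> ({0..T} \<times> UNIV) \<inter> cball (t0, x0) r"
    "w (fst z) (snd z) - (\<phi> z - psi (t0, x0) z) \<le> w t0 x0 - \<phi> (t0, x0)" for z
  proof (rule psi_zero_near_centre)
    have "dist z (t0, x0) \<le> r" using z(1) by (simp add: dist_commute)
    with z(1) r have "w (fst z) (snd z) - \<phi> z \<ge> w t0 x0 - \<phi> (t0, x0)"
      using \<delta>(2)[of "fst z" "snd z"] by auto
    with z(2) show "psi (t0, x0) z \<le> 0" by simp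
    show "norm (z - (t0, x0)) < 1" using \<open>dist z (t0, x0) \<le> r\<close> r by (simp add: dist_norm)
  qed
  with r that show ?thesis by blast
qed

locale game_hamiltonian =
  fixes T :: real
    and U :: "'u::metric_space set" and V :: "'v::metric_space set"
    and b :: "real \<Rightarrow> real^'n \<Rightarrow> 'u \<Rightarrow> 'v \<Rightarrow> real^'n"
    and \<sigma> :: "real \<Rightarrow> real^'n \<Rightarrow> 'u \<Rightarrow> 'v \<Rightarrow> real^'d^'n"
    and f :: "real \<Rightarrow> real^'n \<Rightarrow> real \<Rightarrow> real^'d \<Rightarrow> 'u \<Rightarrow> 'v \<Rightarrow> real"
  assumes U: "compact U" "U \<noteq> {}"
    and V: "compact V" "V \<noteq> {}"
    and b_cont: "\<forall>x. continuous_on ({0..T} \<times> U \<times> V) (\<lambda>(t, u, v). b t x u v)"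
    and b_lip: "\<exists>L. \<forall>t\<in>{0..T}. \<forall>u\<in>U. \<forall>v\<in>V. \<forall>x x'.
                  norm (b t x u v - b t x' u v) \<le> L * norm (x - x')"
    and \<sigma>_cont: "\<forall>x. continuous_on ({0..T} \<times> U \<times> V) (\<lambda>(t, u, v). \<sigma> t x u v)"
    and \<sigma>_lip: "\<exists>L. \<forall>t\<in>{0..T}. \<forall>u\<in>U. \<forall>v\<in>V. \<forall>x x'.
                  norm (\<sigma> t x u v - \<sigma> t x' u v) \<le> L * norm (x - x')"
    and f_cont: "\<forall>x y z. continuous_on ({0..T} \<times> U \<times> V) (\<lambda>(t, u, v). f t x y z u v)"
    and f_lip: "\<exists>L. \<forall>t\<in>{0..T}. \<forall>u\<in>U. \<forall>v\<in>V. \<forall>x y z x' y' z'.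
                  \<bar>f t x y z u v - f t x' y' z' u v\<bar>
                    \<le> L * (norm (x - x') + \<bar>y - y'\<bar> + norm (z - z'))"
begin

lemma coefficients_tendsto:
  assumes t: "(t \<longlongrightarrow> t0) F" and x: "(x \<longlongrightarrow> x0) F" and u: "(u \<longlongrightarrow> u0) F" and v: "(v \<longlongrightarrow> v0) F"
    and inside: "eventually (\<lambda>s. t s \<in> {0..T} \<and> u s \<in> U \<and> v s \<in> V) F"
    and p0: "t0 \<in> {0..T}" "u0 \<in> U" "v0 \<in> V"
  shows "((\<lambda>s. b (t s) (x s) (u s) (v s)) \<longlongrightarrow> b t0 x0 u0 v0) F"
    "((\<lambda>s. \<sigma> (t s) (x s) (u s) (v s)) \<longlongrightarrow> \<sigma> t0 x0 u0 v0) F"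
    "(y \<longlongrightarrow> y0) F \<Longrightarrow> (z \<longlongrightarrow> z0) F \<Longrightarrow>
       ((\<lambda>s. f (t s) (x s) (y s) (z s) (u s) (v s)) \<longlongrightarrow> f t0 x0 y0 z0 u0 v0) F"
proof -
  let ?a = "\<lambda>s. (t s, u s, v s)" and ?S = "{0..T} \<times> U \<times> V"
  have a: "(?a \<longlongrightarrow> (t0, u0, v0)) F" "eventually (\<lambda>s. ?a s \<in> ?S) F" "(t0, u0, v0) \<in> ?S"
    using t u v inside p0 by (auto intro!: tendsto_intros)
  obtain Lb where Lb: "\<forall>t\<in>{0..T}. \<forall>u\<in>U. \<forall>v\<in>V. \<forall>x x'. norm (b t x u v - b t x' u v) \<le> Lb * norm (x - x')"
    using b_lip by blast
  have "((\<lambda>s. (\<lambda>x (t, u, v). b t x u v) (x s) (?a s)) \<longlongrightarrow> (\<lambda>x (t, u, v). b t x u v) x0 (t0, u0, v0)) F"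
    using inside by (intro tendsto_param_modulus[where g = "\<lambda>x (t, u, v). b t x u v",
        OF _ a(3,1,2) _ tendsto_scaled_distance[OF x, of Lb]]) (use b_cont Lb in \<open>auto elim!: eventually_mono\<close>)
  then show "((\<lambda>s. b (t s) (x s) (u s) (v s)) \<longlongrightarrow> b t0 x0 u0 v0) F" by simp
  obtain L\<sigma> where L\<sigma>: "\<forall>t\<in>{0..T}. \<forall>u\<in>U. \<forall>v\<in>V. \<forall>x x'. norm (\<sigma> t x u v - \<sigma> t x' u v) \<le> L\<sigma> * norm (x - x')"
    using \<sigma>_lip by blast
  have "((\<lambda>s. (\<lambda>x (t, u, v). \<sigma> t x u v) (x s) (?a s)) \<longlongrightarrow> (\<lambda>x (t, u, v). \<sigma> t x u v) x0 (t0, u0, v0)) F"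
    using inside by (intro tendsto_param_modulus[where g = "\<lambda>x (t, u, v). \<sigma> t x u v",
        OF _ a(3,1,2) _ tendsto_scaled_distance[OF x, of L\<sigma>]]) (use \<sigma>_cont L\<sigma> in \<open>auto elim!: eventually_mono\<close>)
  then show "((\<lambda>s. \<sigma> (t s) (x s) (u s) (v s)) \<longlongrightarrow> \<sigma> t0 x0 u0 v0) F" by simp
  assume y: "(y \<longlongrightarrow> y0) F" and z: "(z \<longlongrightarrow> z0) F"
  obtain Lf where Lf: "\<forall>t\<in>{0..T}. \<forall>u\<in>U. \<forall>v\<in>V. \<forall>x y z x' y' z'.
      \<bar>f t x y z u v - f t x' y' z' u v\<bar> \<le> Lf * (norm (x - x') + \<bar>y - y'\<bar> + norm (z - z'))"
    using f_lip by blast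
  let ?g = "\<lambda>(x, y, z) (t, u, v). f t x y z u v"
  have e_lim: "((\<lambda>s. Lf * (norm (x s - x0) + \<bar>y s - y0\<bar> + norm (z s - z0))) \<longlongrightarrow> 0) F"
    using tendsto_add_zero[OF tendsto_add_zero[OF tendsto_scaled_distance[OF x, of 1]
          tendsto_scaled_distance[OF y, of 1]] tendsto_scaled_distance[OF z, of 1]]
    by (auto dest: tendsto_mult_right_zero[of _ F Lf])
  have "((\<lambda>s. ?g (x s, y s, z s) (?a s)) \<longlongrightarrow> ?g (x0, y0, z0) (t0, u0, v0)) F"
    using inside
    by (intro tendsto_param_modulus[where g = ?g, OF _ a(3,1,2) _ e_lim]) (use f_cont Lf in \<open>auto elim!: eventually_mono\<close>)
  then show "((\<lambda>s. f (t s) (x s) (y s) (z s) (u s) (v s)) \<longlongrightarrow> f t0 x0 y0 z0 u0 v0) F" by simp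
qed

lemma ham_int_tendsto:
  assumes t: "(t \<longlongrightarrow> t0) F" and x: "(x \<longlongrightarrow> x0) F" and y: "(y \<longlongrightarrow> y0) F"
    and q: "(q \<longlongrightarrow> q0) F" and X: "(X \<longlongrightarrow> X0) F" and u: "(u \<longlongrightarrow> u0) F" and v: "(v \<longlongrightarrow> v0) F"
    and inside: "eventually (\<lambda>s. t s \<in> {0..T} \<and> u s \<in> U \<and> v s \<in> V) F"
    and p0: "t0 \<in> {0..T}" "u0 \<in> U" "v0 \<in> V"
  shows "((\<lambda>s. ham_int b \<sigma> f (t s) (x s) (y s) (q s) (X s) (u s) (v s))
           \<longlongrightarrow> ham_int b \<sigma> f t0 x0 y0 q0 X0 u0 v0) F"
proof -
  note coeff = coefficients_tendsto[OF t x u v inside p0]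
  have z: "((\<lambda>s. q s v* \<sigma> (t s) (x s) (u s) (v s)) \<longlongrightarrow> q0 v* \<sigma> t0 x0 u0 v0) F"
    unfolding vector_matrix_mult_def using q coeff(2) by (intro tendsto_intros)
  show ?thesis
    unfolding ham_int_def trace_def matrix_matrix_mult_def transpose_def
    using coeff(1,2) coeff(3)[OF y z] q X by (intro tendsto_intros)
qed

definition integrand :: "(real \<times> (real^'n) \<times> real \<times> (real^'n) \<times> (real^'n^'n)) \<times> ('u \<times> 'v) \<Rightarrow> real" where
  "integrand = (\<lambda>((t, x, y, q, X), (u, v)). ham_int b \<sigma> f t x y q X u v)"

lemma integrand_continuous: "continuous_on (({0..T} \<times> UNIV) \<times> (U \<times> V)) integrand"
  unfolding continuous_on_def
proof
  fix p :: "(real \<times> (real^'n) \<times> real \<times> (real^'n) \<times> (real^'n^'n)) \<times> ('u \<times> 'v)"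
  assume p: "p \<in> ({0..T} \<times> UNIV) \<times> (U \<times> V)"
  let ?F = "at p within ({0..T} \<times> UNIV) \<times> (U \<times> V)"
  have "((\<lambda>s. s) \<longlongrightarrow> p) ?F" by (rule tendsto_ident_at)
  moreover have "eventually (\<lambda>s. s \<in> ({0..T} \<times> UNIV) \<times> (U \<times> V)) ?F"
    unfolding eventually_at_filter by simp
  ultimately show "(integrand \<longlongrightarrow> integrand p) ?F"
    unfolding integrand_def case_prod_beta
    by (intro ham_int_tendsto) (use p in \<open>auto intro!: tendsto_intros elim!: eventually_mono\<close>)
qed

lemma Hminus_tendsto:
  assumes lim: "((\<lambda>s. (t s, x s, y s, q s, X s)) \<longlongrightarrow> (t0, x0, y0, q0, X0)) F"
    and inside: "eventually (\<lambda>s. t s \<in> {0..T}) F" and t0: "t0 \<in> {0..T}"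
  shows "((\<lambda>s. Hminus U V b \<sigma> f (t s) (x s) (y s) (q s) (X s)) \<longlongrightarrow> Hminus U V b \<sigma> f t0 x0 y0 q0 X0) F"
proof -
  have "((\<lambda>s. SUP u\<in>U. INF v\<in>V. integrand ((t s, x s, y s, q s, X s), (u, v))) \<longlongrightarrow>
         (SUP u\<in>U. INF v\<in>V. integrand ((t0, x0, y0, q0, X0), (u, v)))) F"
    by (rule supinf_tendsto[OF integrand_continuous _ U V _ lim])
       (use inside t0 in \<open>auto intro: closed_Times elim!: eventually_mono\<close>)
  then show ?thesis by (simp add: Hminus_def integrand_def)
qed

lemma ham_int_bounded:
  assumes "t \<in> {0..T}"
  obtains B where "\<forall>u\<in>U. \<forall>v\<in>V. \<bar>ham_int b \<sigma> f t x y q X u v\<bar> \<le> B"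
proof -
  let ?C = "{(t, x, y, q, X)} \<times> (U \<times> V)"
  have "continuous_on ?C integrand"
    by (rule continuous_on_subset[OF integrand_continuous]) (use assms in auto)
  then have "bounded (integrand ` ?C)"
    using U V by (intro compact_imp_bounded compact_continuous_image compact_Times) auto
  then show ?thesis using that unfolding bounded_iff by (auto simp: integrand_def)
qed

text \<open>The penalised Hamiltonian dominates \<open>H\<^sup>-\<close> plus the penalty, since the penalty
  does not depend on the controls.\<close>
lemma Hminus_plus_penalty_le_Hpen:
  assumes "t \<in> {0..T}"
  shows "Hminus U V b \<sigma> f t x y q X + real m * max 0 (h t x - y) \<le> Hpen U V b \<sigma> f h m t x y q X"
proof -
  let ?c = "real m * max 0 (h t x - y)"
  obtain B where B: "\<forall>u\<in>U. \<forall>v\<in>V. \<bar>ham_int b \<sigma> f t x y q X u v\<bar> \<le> B"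
    using ham_int_bounded[OF assms] by blast
  have "(SUP u\<in>U. INF v\<in>V. ham_int b \<sigma> f t x y q X u v)
      \<le> (SUP u\<in>U. INF v\<in>V. ham_int b \<sigma> f t x y q X u v + ?c) + - ?c"
  proof (rule supinf_le[OF U(2) V(2), where B = "B + ?c"])
    have c: "?c \<ge> 0" by simp
    show "\<forall>u\<in>U. \<forall>v\<in>V. \<bar>ham_int b \<sigma> f t x y q X u v\<bar> \<le> B + ?c
                          \<and> \<bar>ham_int b \<sigma> f t x y q X u v + ?c\<bar> \<le> B + ?c"
    proof (intro ballI)
      fix u v assume "u \<in> U" "v \<in> V"
      with B have "\<bar>ham_int b \<sigma> f t x y q X u v\<bar> \<le> B" by blast
      with c show "\<bar>ham_int b \<sigma> f t x y q X u v\<bar> \<le> B + ?c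
                   \<and> \<bar>ham_int b \<sigma> f t x y q X u v + ?c\<bar> \<le> B + ?c" by linarith
    qed
  qed simp
  then show ?thesis by (simp add: Hminus_def Hpen_def)
qed

end

locale penalised_approximation = game_hamiltonian T U V b \<sigma> f
  for T :: real
    and U :: "'u::metric_space set" and V :: "'v::metric_space set"
    and b :: "real \<Rightarrow> real^'n \<Rightarrow> 'u \<Rightarrow> 'v \<Rightarrow> real^'n"
    and \<sigma> :: "real \<Rightarrow> real^'n \<Rightarrow> 'u \<Rightarrow> 'v \<Rightarrow> real^'d^'n"
    and f :: "real \<Rightarrow> real^'n \<Rightarrow> real \<Rightarrow> real^'d \<Rightarrow> 'u \<Rightarrow> 'v \<Rightarrow> real" +
  fixes h :: "real \<Rightarrow> real^'n \<Rightarrow> real"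
    and \<Phi> :: "real^'n \<Rightarrow> real"
    and W :: "nat \<Rightarrow> real \<Rightarrow> real^'n \<Rightarrow> real"
    and Wt :: "real \<Rightarrow> real^'n \<Rightarrow> real"
  assumes T_pos: "T > 0"
    and h_cont: "\<forall>x. continuous_on {0..T} (\<lambda>t. h t x)"
    and h_lip: "\<exists>L. \<forall>t\<in>{0..T}. \<forall>x x'. \<bar>h t x - h t x'\<bar> \<le> L * norm (x - x')"
    and W_cont: "\<forall>m\<ge>1. continuous_on ({0..T} \<times> UNIV) (\<lambda>(t, x). W m t x)"
    and W_mono: "\<forall>m\<ge>1. \<forall>t\<in>{0..T}. \<forall>x. W m t x \<le> W (Suc m) t x"
    and W_visc: "\<forall>m\<ge>1. visc_sol_pen T U V b \<sigma> f h \<Phi> m (W m)"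
    and Wt_lim: "\<forall>t\<in>{0..T}. \<forall>x. (\<lambda>m. W m t x) \<longlonglongrightarrow> Wt t x"
begin

lemma W_incseq: "t \<in> {0..T} \<Longrightarrow> incseq (\<lambda>m. W (Suc m) t x)"
  using W_mono by (intro incseq_SucI) simp

lemma W_le_limit:
  assumes "1 \<le> m" "t \<in> {0..T}"
  shows "W m t x \<le> Wt t x"
proof -
  obtain k where "m = Suc k" using assms(1) by (cases m) auto
  then show ?thesis
    using incseq_le[OF W_incseq[OF assms(2)] LIMSEQ_Suc[OF Wt_lim[rule_format, OF assms(2)]]] by simp
qed

text \<open>A supremum of continuous functions is lower semicontinuous.\<close>
lemma limit_lower_semicontinuous: "lsc_on T Wt"
  unfolding lsc_on_def
proof (intro ballI allI impI)
  fix t x and e :: real assume t: "t \<in> {0..T}" and e: "e > 0"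
  have "eventually (\<lambda>m. 1 \<le> m \<and> Wt t x - e/2 < W m t x) sequentially"
    using e by (intro eventually_conj eventually_ge_at_top order_tendstoD(1)[OF Wt_lim[rule_format, OF t]]) simp
  then obtain m where m: "1 \<le> m" "Wt t x - e/2 < W m t x"
    using eventually_happens'[OF sequentially_bot] by blast
  have "continuous_on ({0..T} \<times> UNIV) (\<lambda>(t, x). W m t x)" using W_cont m(1) by blast
  then obtain d where d: "d > 0" "\<forall>p\<in>{0..T} \<times> UNIV. dist p (t, x) < d \<longrightarrow>
      dist ((\<lambda>(t, x). W m t x) p) (W m t x) < e/2"
    using t e unfolding continuous_on_iff by (metis UNIV_I half_gt_zero mem_Times_iff fst_conv snd_conv case_prod_conv)
  show "\<exists>\<delta>>0. \<forall>s y. s \<in> {0..T} \<and> dist (s, y) (t, x) < \<delta> \<longrightarrow> Wt t x - e < Wt s y"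
  proof (intro exI[of _ d] conjI allI impI)
    fix s y assume sy: "s \<in> {0..T} \<and> dist (s, y) (t, x) < d"
    then have "dist (W m s y) (W m t x) < e/2" using d(2) by force
    moreover have "W m s y \<le> Wt s y" using W_le_limit m(1) sy by blast
    ultimately show "Wt t x - e < Wt s y" using m(2) unfolding dist_real_def abs_less_iff by linarith
  qed (rule d(1))
qed

text \<open>Every approximation equals \<open>\<Phi>\<close> at time \<open>T\<close>, hence so does the limit.\<close>
lemma limit_terminal_condition: "Wt T x \<ge> \<Phi> x"
proof -
  have "T \<in> {0..T}" using T_pos by simp
  moreover have "W m T x = \<Phi> x" if "m \<ge> 1" for m
    using W_visc that unfolding visc_sol_pen_def by blast
  ultimately show ?thesis
    using LIMSEQ_le_const[OF Wt_lim[rule_format, of T x], of "\<Phi> x"] by force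
qed

lemma obstacle_tendsto:
  assumes t: "(t \<longlongrightarrow> t0) F" and x: "(x \<longlongrightarrow> x0) F"
    and inside: "eventually (\<lambda>s. t s \<in> {0..T}) F" and t0: "t0 \<in> {0..T}"
  shows "((\<lambda>s. h (t s) (x s)) \<longlongrightarrow> h t0 x0) F"
proof -
  obtain L where L: "\<forall>t\<in>{0..T}. \<forall>x x'. \<bar>h t x - h t x'\<bar> \<le> L * norm (x - x')"
    using h_lip by blast
  show ?thesis
    using inside by (intro tendsto_param_modulus[where g = "\<lambda>x t. h t x", OF _ t0 t _ _
        tendsto_scaled_distance[OF x, of L]]) (use h_cont L in \<open>auto elim!: eventually_mono\<close>)
qed

lemma perturbed_test_points:
  assumes \<phi>: "C3lb \<phi>" and t0: "0 \<le> t0" "t0 < T" and min: "loc_min T Wt \<phi> t0 x0"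
  defines "\<phi>' \<equiv> \<lambda>z. \<phi> z - psi (t0, x0) z"
  obtains p M where "filterlim M at_top sequentially" "\<And>j. 1 \<le> M j" "p \<longlonglongrightarrow> (t0, x0)"
    "(\<lambda>j. W (M j) (fst (p j)) (snd (p j))) \<longlonglongrightarrow> Wt t0 x0"
    "eventually (\<lambda>j. fst (p j) \<in> {0..<T} \<and> loc_min T (W (M j)) \<phi>' (fst (p j)) (snd (p j))) sequentially"
proof -
  define z0 where "z0 = (t0, x0)"
  obtain r where r: "0 < r" "r < 1" and strict_bump: "\<And>z. z \<in> ({0..T} \<times> UNIV) \<inter> cball z0 r \<Longrightarrow>
      Wt (fst z) (snd z) - \<phi>' z \<le> Wt t0 x0 - \<phi> (t0, x0) \<Longrightarrow> z = z0"
    using strict_minimum_after_bump[OF min] unfolding z0_def \<phi>'_def by blast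
  define K where "K = ({0..T} \<times> UNIV) \<inter> cball z0 r"
  have K: "compact K" "z0 \<in> K" using t0 r by (auto simp: K_def z0_def intro!: closed_Int_compact closed_Times)
  have \<phi>'_cont: "continuous_on K \<phi>'"
    unfolding \<phi>'_def by (rule C3lb_continuous[OF C3lb_diff[OF \<phi> C3lb_psi]])
  have W_cont_K: "continuous_on K (\<lambda>z. W (Suc m) (fst z) (snd z))" for m
  proof (rule continuous_on_subset)
    show "continuous_on ({0..T} \<times> UNIV) (\<lambda>z. W (Suc m) (fst z) (snd z))"
      using W_cont[rule_format, of "Suc m"] by (simp add: case_prod_beta)
  qed (auto simp: K_def)
  have strict: "z = z0" if "z \<in> K" "Wt (fst z) (snd z) - \<phi>' z \<le> Wt (fst z0) (snd z0) - \<phi>' z0" for z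
    using strict_bump that by (simp add: K_def z0_def \<phi>'_def psi_centre)
  have W_mono_K: "W (Suc m) (fst z) (snd z) \<le> W (Suc (Suc m)) (fst z) (snd z)" if "z \<in> K" for m z
    using W_mono that by (auto simp: K_def)
  have W_lim_K: "(\<lambda>m. W (Suc m) (fst z) (snd z)) \<longlonglongrightarrow> Wt (fst z) (snd z)" if "z \<in> K" for z
    using Wt_lim that by (intro LIMSEQ_Suc) (auto simp: K_def)
  obtain M0 p where M0: "strict_mono M0" and p: "\<And>j. p j \<in> K"
    "\<And>j q. q \<in> K \<Longrightarrow> W (Suc (M0 j)) (fst (p j)) (snd (p j)) - \<phi>' (p j) \<le> W (Suc (M0 j)) (fst q) (snd q) - \<phi>' q"
    "p \<longlonglongrightarrow> z0" "(\<lambda>j. W (Suc (M0 j)) (fst (p j)) (snd (p j))) \<longlonglongrightarrow> Wt (fst z0) (snd z0)"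
    by (rule minimisers_converge[where w = "\<lambda>m z. W (Suc m) (fst z) (snd z)"
          and wl = "\<lambda>z. Wt (fst z) (snd z)", OF K W_cont_K \<phi>'_cont W_mono_K W_lim_K strict]) auto
  have M_lim: "filterlim (\<lambda>j. Suc (M0 j)) at_top sequentially"
    using filterlim_subseq[OF M0] by (rule filterlim_compose[OF filterlim_Suc])
  have "eventually (\<lambda>j. fst (p j) < T) sequentially"
    using t0(2) by (intro order_tendstoD(2)[OF tendsto_fst[OF p(3)]]) (simp add: z0_def)
  moreover have "eventually (\<lambda>j. dist (p j) z0 < r) sequentially"
    using tendstoD[OF p(3) r(1)] .
  ultimately have "eventually (\<lambda>j. fst (p j) \<in> {0..<T} \<and> loc_min T (W (Suc (M0 j))) \<phi>' (fst (p j)) (snd (p j))) sequentially"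
  proof eventually_elim
    case (elim j)
    with p(1)[of j] have "fst (p j) \<in> {0..<T}" by (auto simp: K_def z0_def)
    moreover have "loc_min T (W (Suc (M0 j))) \<phi>' (fst (p j)) (snd (p j))"
      by (rule loc_min_at_interior_minimiser[where w = "W (Suc (M0 j))", OF p(2)[where j = j, unfolded K_def]]) (use elim in auto)
    ultimately show ?case by blast
  qed
  with M_lim show ?thesis using that p(3,4) unfolding z0_def by auto
qed

text \<open>The supersolution inequality at an interior test point: pass to the limit in the
  penalised equation for \<open>W (M j)\<close> at the perturbed minima.\<close>
lemma supersolution_at_test_point:
  assumes \<phi>: "C3lb \<phi>" and t0: "0 \<le> t0" "t0 < T" and min: "loc_min T Wt \<phi> t0 x0"
  shows "min (Wt t0 x0 - h t0 x0)
             (- dt \<phi> t0 x0 - Hminus U V b \<sigma> f t0 x0 (Wt t0 x0) (Dx \<phi> t0 x0) (D2x \<phi> t0 x0)) \<ge> 0"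
proof -
  define \<phi>' where "\<phi>' = (\<lambda>z. \<phi> z - psi (t0, x0) z)"
  have \<phi>': "C3lb \<phi>'" unfolding \<phi>'_def by (rule C3lb_diff[OF \<phi> C3lb_psi])
  obtain M p where M: "filterlim M at_top sequentially" "\<And>j. 1 \<le> M j" and p: "p \<longlonglongrightarrow> (t0, x0)"
    and W_lim: "(\<lambda>j. W (M j) (fst (p j)) (snd (p j))) \<longlonglongrightarrow> Wt t0 x0"
    and near: "eventually (\<lambda>j. fst (p j) \<in> {0..<T} \<and> loc_min T (W (M j)) \<phi>' (fst (p j)) (snd (p j))) sequentially"
    by (rule perturbed_test_points[OF \<phi> t0 min]) (auto simp: \<phi>'_def)
  let ?t = "\<lambda>j. fst (p j)" and ?x = "\<lambda>j. snd (p j)"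
  let ?W = "\<lambda>j. W (M j) (?t j) (?x j)"
  let ?H = "\<lambda>j. Hminus U V b \<sigma> f (?t j) (?x j) (?W j) (Dx \<phi>' (?t j) (?x j)) (D2x \<phi>' (?t j) (?x j))"
  have tx: "((\<lambda>j. (?t j, ?x j)) \<longlongrightarrow> (t0, x0)) sequentially" using p by simp
  have t_lim: "?t \<longlonglongrightarrow> t0" and x_lim: "?x \<longlonglongrightarrow> x0"
    using tendsto_fst[OF p] tendsto_snd[OF p] by simp_all
  have inside: "eventually (\<lambda>j. ?t j \<in> {0..T}) sequentially" using near by eventually_elim auto
  have "t0 \<in> {0..T}" using t0 by simp
  note jets = C3lb_jets_tendsto[OF \<phi>' tx, unfolded \<phi>'_def jets_diff_psi_at_centre[OF \<phi>], folded \<phi>'_def]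
  \<comment> \<open>the penalised equation for \<open>W (M j)\<close> at the test points, combined with \<open>H\<^sup>- + penalty \<le> Hpen\<close>\<close>
  have penalised: "eventually (\<lambda>j. ?H j + real (M j) * max 0 (h (?t j) (?x j) - ?W j) \<le> - dt \<phi>' (?t j) (?x j)) sequentially"
    using near
  proof eventually_elim
    case (elim j)
    then have "- dt \<phi>' (?t j) (?x j) - Hpen U V b \<sigma> f h (M j) (?t j) (?x j) (?W j)
        (Dx \<phi>' (?t j) (?x j)) (D2x \<phi>' (?t j) (?x j)) \<ge> 0"
      using W_visc[rule_format, OF M(2)] \<phi>' unfolding visc_sol_pen_def by auto
    moreover have "?H j + real (M j) * max 0 (h (?t j) (?x j) - ?W j) \<le> Hpen U V b \<sigma> f h (M j) (?t j) (?x j)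
        (?W j) (Dx \<phi>' (?t j) (?x j)) (D2x \<phi>' (?t j) (?x j))"
      using elim by (intro Hminus_plus_penalty_le_Hpen) auto
    ultimately show ?case by linarith
  qed
  have H_lim: "?H \<longlonglongrightarrow> Hminus U V b \<sigma> f t0 x0 (Wt t0 x0) (Dx \<phi> t0 x0) (D2x \<phi> t0 x0)"
    using t_lim x_lim W_lim jets(2,3) inside \<open>t0 \<in> {0..T}\<close>
    by (intro Hminus_tendsto) (auto intro!: tendsto_intros)
  have dt_lim: "(\<lambda>j. - dt \<phi>' (?t j) (?x j)) \<longlonglongrightarrow> - dt \<phi> t0 x0"
    using jets(1) by (rule tendsto_minus)
  have obstacle_lim: "(\<lambda>j. h (?t j) (?x j) - ?W j) \<longlonglongrightarrow> h t0 x0 - Wt t0 x0"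
    by (intro tendsto_diff obstacle_tendsto t_lim x_lim inside W_lim) (use t0 in simp)
  from penalised_limit[OF penalised H_lim dt_lim obstacle_lim M(1)] show ?thesis by simp
qed

end

theorem proposition4p1:
  fixes T :: real
    and U :: "'u::metric_space set" and V :: "'v::metric_space set"
    and b :: "real \<Rightarrow> real^'n \<Rightarrow> 'u \<Rightarrow> 'v \<Rightarrow> real^'n"
    and \<sigma> :: "real \<Rightarrow> real^'n \<Rightarrow> 'u \<Rightarrow> 'v \<Rightarrow> real^'d^'n"
    and f :: "real \<Rightarrow> real^'n \<Rightarrow> real \<Rightarrow> real^'d \<Rightarrow> 'u \<Rightarrow> 'v \<Rightarrow> real"
    and \<Phi> :: "real^'n \<Rightarrow> real"
    and h :: "real \<Rightarrow> real^'n \<Rightarrow> real"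
    and W :: "nat \<Rightarrow> real \<Rightarrow> real^'n \<Rightarrow> real"
    and Wt :: "real \<Rightarrow> real^'n \<Rightarrow> real"
  assumes T_pos: "T > 0"
    and U: "compact U" "U \<noteq> {}"
    and V: "compact V" "V \<noteq> {}"
    \<comment> \<open>(H3.1)\<close>
    and b_cont: "\<forall>x. continuous_on ({0..T} \<times> U \<times> V) (\<lambda>(t, u, v). b t x u v)"
    and b_lip: "\<exists>L. \<forall>t\<in>{0..T}. \<forall>u\<in>U. \<forall>v\<in>V. \<forall>x x'.
                  norm (b t x u v - b t x' u v) \<le> L * norm (x - x')"
    and \<sigma>_cont: "\<forall>x. continuous_on ({0..T} \<times> U \<times> V) (\<lambda>(t, u, v). \<sigma> t x u v)"
    and \<sigma>_lip: "\<exists>L. \<forall>t\<in>{0..T}. \<forall>u\<in>U. \<forall>v\<in>V. \<forall>x x'.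
                  norm (\<sigma> t x u v - \<sigma> t x' u v) \<le> L * norm (x - x')"
    \<comment> \<open>(H3.2)\<close>
    and f_cont: "\<forall>x y z. continuous_on ({0..T} \<times> U \<times> V) (\<lambda>(t, u, v). f t x y z u v)"
    and f_lip: "\<exists>L. \<forall>t\<in>{0..T}. \<forall>u\<in>U. \<forall>v\<in>V. \<forall>x y z x' y' z'.
                  \<bar>f t x y z u v - f t x' y' z' u v\<bar>
                    \<le> L * (norm (x - x') + \<bar>y - y'\<bar> + norm (z - z'))"
    and \<Phi>_lip: "\<exists>L. \<forall>x x'. \<bar>\<Phi> x - \<Phi> x'\<bar> \<le> L * norm (x - x')"
    and h_cont: "\<forall>x. continuous_on {0..T} (\<lambda>t. h t x)"
    and h_lip: "\<exists>L. \<forall>t\<in>{0..T}. \<forall>x x'. \<bar>h t x - h t x'\<bar> \<le> L * norm (x - x')"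
    and h_T: "\<forall>x. h T x \<le> \<Phi> x"
    \<comment> \<open>properties of W_m = essinf_beta esssup_u mY_t (stated in the paper)\<close>
    and W_cont: "\<forall>m\<ge>1. continuous_on ({0..T} \<times> UNIV) (\<lambda>(t, x). W m t x)"
    and W_lin: "\<forall>m\<ge>1. \<exists>C. \<forall>t\<in>{0..T}. \<forall>x. \<bar>W m t x\<bar> \<le> C * (1 + norm x)"
    and W_mono: "\<forall>m\<ge>1. \<forall>t\<in>{0..T}. \<forall>x. W m t x \<le> W (Suc m) t x"
    and W_visc: "\<forall>m\<ge>1. visc_sol_pen T U V b \<sigma> f h \<Phi> m (W m)"
    and W_bdd: "\<exists>C. \<forall>m\<ge>1. \<forall>t\<in>{0..T}. \<forall>x. W m t x \<le> C * (1 + norm x)"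
    and Wt_lim: "\<forall>t\<in>{0..T}. \<forall>x. (\<lambda>m. W m t x) \<longlonglongrightarrow> Wt t x"
  shows "visc_super_obst T U V b \<sigma> f h \<Phi> Wt"
proof -
  interpret penalised_approximation T U V b \<sigma> f h \<Phi> W Wt
    by unfold_locales (fact T_pos U V b_cont b_lip \<sigma>_cont \<sigma>_lip f_cont f_lip h_cont h_lip
        W_cont W_mono W_visc Wt_lim)+
  show ?thesis
    unfolding visc_super_obst_def
    using limit_lower_semicontinuous limit_terminal_condition supersolution_at_test_point by blast
qed

end
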